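(* Let $p\ge 3$ be a prime and write $\dfrac{(q^2;q^2)_\infty^2}{(q;q)_\infty(q^p;q^p)_\infty}=\sum_{n\ge0}a_nq^n$. Let $$N=N(p)=\max_s\ \min\Big\{\tfrac{r(r+1)}{2} : 0\le r\le p-1,\ \tfrac{r(r+1)}{2}\equiv s\pmod p\Big\}-p,$$ the maximum over residues $s\in\{0,\dots,p-1\}$ for which the set is nonempty. Then for all $n>N$: $a_n>0$ if $n\equiv \frac{r(r+1)}{2}\pmod p$ for some integer $r$, and $a_n=0$ otherwise.
   Context: For $|q|<1$, $(a;q)_\infty=\prod_{k\ge0}(1-aq^k)$. *)

theory Defs
  imports "HOL-Analysis.Analysis" "HOL-Number_Theory.Cong"
begin

definition qpoch_inf :: "complex \<Rightarrow> complex \<Rightarrow> complex" where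
  "qpoch_inf a q = (\<Prod>k. (1 - a * q ^ k))"

definition tri :: "nat \<Rightarrow> nat" where
  "tri r = r * (r + 1) div 2"

definition tri_res :: "nat \<Rightarrow> nat \<Rightarrow> nat set" where
  "tri_res p s = {tri r | r. r \<le> p - 1 \<and> [tri r = s] (mod p)}"

definition bigN :: "nat \<Rightarrow> int" where
  "bigN p = int (Max {Min (tri_res p s) | s. s \<le> p - 1 \<and> tri_res p s \<noteq> {}}) - int p"

end

(*
  By Gauss's identity (q^2;q^2)_inf^2 / (q;q)_inf = psi(q) = sum_r q^(r(r+1)/2), and by the
  partition generating function 1/(q^p;q^p)_inf = sum_m p(m) q^(pm), the coefficient a_n is the sum
  of p(m) over all ways of writing n = r(r+1)/2 + p m. As p(m) >= 1, a_n is a positive integer if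
  some triangular number t <= n satisfies t = n (mod p), and a_n = 0 otherwise. Since p is odd,
  r(r+1)/2 mod p depends only on r mod p, so the least triangular number in the residue class of n
  is at most N + p < n + p; being congruent to n, it is at most n.

  Gauss's identity is the limit of the finite identity
    (-q;q)_n (-1;q)_n = sum_{i<=n} q^(i(i+1)/2) [2n, n-i]_q + sum_{i<n} q^(i(i+1)/2) [2n, n+1+i]_q,
  which is the q-binomial theorem at z = q^(-n). The Gaussian binomials are bounded and tend to
  1/(q;q)_inf, so Tannery's theorem gives the limit.
*)

theory Submission
  imports Defs "HOL-Real_Asymp.Real_Asymp"
begin

section \<open>Triangular numbers\<close>

lemma tri_0 [simp]: "tri 0 = 0"
  by (simp add: tri_def)

lemma tri_Suc: "tri (Suc r) = tri r + Suc r"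
  unfolding tri_def by (simp add: algebra_simps)

lemma double_tri: "2 * tri r = r * (r + 1)"
  by (induction r) (simp_all add: tri_Suc tri_def algebra_simps)

lemma le_tri: "r \<le> tri r"
  by (induction r) (simp_all add: tri_Suc)

lemma strict_mono_tri: "strict_mono tri"
  by (rule strict_mono_Suc_iff[THEN iffD2]) (simp add: tri_Suc)

lemma Suc_choose_two: "Suc n choose 2 = tri n"
  by (simp add: choose_two tri_def mult.commute)

lemma choose_two_Suc: "Suc j choose 2 = (j choose 2) + j"
  by (simp add: numeral_2_eq_2)

lemma choose_two_add_tri:
  "(k choose 2) + tri n = (if k \<le> n then tri (n - k) else tri (k - Suc n)) + n * k"
proof -
  have double_choose: "2 * (k choose 2) + k = k * k" for k :: nat
    by (cases k) (simp_all add: Suc_choose_two double_tri)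
  show ?thesis
  proof (cases "k \<le> n")
    case True
    then obtain d where "n = k + d" using le_Suc_ex by blast
    then have "2 * ((k choose 2) + tri n) = 2 * (tri (n - k) + n * k)"
      using double_choose[of k] double_tri[of d] double_tri[of n] by (simp add: algebra_simps)
    then show ?thesis using True by simp
  next
    case False
    then obtain d where "k = Suc n + d" by (metis less_iff_Suc_add add_Suc not_le)
    then have "2 * ((k choose 2) + tri n) = 2 * (tri (k - Suc n) + n * k)"
      using double_choose[of k] double_tri[of d] double_tri[of n] by (simp add: algebra_simps)
    then show ?thesis using False by simp
  qed
qed

section \<open>Finite q-Pochhammer symbols and Gaussian binomial coefficients\<close>

definition qpoch :: "'a::comm_ring_1 \<Rightarrow> 'a \<Rightarrow> nat \<Rightarrow> 'a" where
  "qpoch a q m = (\<Prod>k<m. 1 - a * q ^ k)"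

lemma qpoch_0 [simp]: "qpoch a q 0 = 1"
  by (simp add: qpoch_def)

lemma qpoch_Suc: "qpoch a q (Suc m) = qpoch a q m * (1 - a * q ^ m)"
  by (simp add: qpoch_def)

fun qbinom :: "'a::comm_ring_1 \<Rightarrow> nat \<Rightarrow> nat \<Rightarrow> 'a" where
  "qbinom q m 0 = 1"
| "qbinom q 0 (Suc k) = 0"
| "qbinom q (Suc m) (Suc k) = qbinom q m (Suc k) + q ^ (m - k) * qbinom q m k"

lemma qbinom_eq_0: "m < k \<Longrightarrow> qbinom q m k = 0"
  by (induction q m k rule: qbinom.induct) auto

lemma qbinom_mult_qpoch:
  "k \<le> m \<Longrightarrow> qbinom q m k * qpoch q q k * qpoch q q (m - k) = qpoch q q m"
proof (induction m arbitrary: k)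
  case 0
  then show ?case by simp
next
  case (Suc m k)
  show ?case
  proof (cases k)
    case 0
    then show ?thesis by simp
  next
    case (Suc j)
    show ?thesis
    proof (cases "j = m")
      case True
      have "qbinom q m m * qpoch q q m = qpoch q q m"
        using Suc.IH[of m] by simp
      then show ?thesis using True \<open>k = Suc j\<close> by (simp add: qbinom_eq_0 qpoch_Suc flip: mult.assoc)
    next
      case False
      with Suc.prems \<open>k = Suc j\<close> have "Suc j \<le> m" by simp
      define u v where "u = q ^ (m - j)" and "v = q * q ^ j"
      have uv: "u * v = q * q ^ m"
        using \<open>Suc j \<le> m\<close> by (simp add: u_def v_def flip: power_add power_Suc)
      have "m - j = Suc (m - Suc j)"
        using \<open>Suc j \<le> m\<close> by simp
      then have m_j: "qpoch q q (m - j) = qpoch q q (m - Suc j) * (1 - u)"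
        by (simp add: u_def qpoch_Suc)
      have IH1: "qbinom q m (Suc j) * (qpoch q q j * (1 - v)) * qpoch q q (m - Suc j) = qpoch q q m"
        using Suc.IH[OF \<open>Suc j \<le> m\<close>] by (simp add: qpoch_Suc v_def)
      have IH2: "qbinom q m j * qpoch q q j * (qpoch q q (m - Suc j) * (1 - u)) = qpoch q q m"
        using Suc.IH[of j] \<open>Suc j \<le> m\<close> m_j by simp
      have pascal: "qbinom q (Suc m) (Suc j) = qbinom q m (Suc j) + u * qbinom q m j"
        by (simp add: u_def)
      have "qbinom q (Suc m) k * qpoch q q k * qpoch q q (Suc m - k)
          = (qbinom q m (Suc j) + u * qbinom q m j) * (qpoch q q j * (1 - v))
            * (qpoch q q (m - Suc j) * (1 - u))"
        using \<open>k = Suc j\<close> by (simp only: pascal diff_Suc_Suc m_j qpoch_Suc v_def)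
      also have "\<dots> = (1 - u) * (qbinom q m (Suc j) * (qpoch q q j * (1 - v)) * qpoch q q (m - Suc j))
            + u * (1 - v) * (qbinom q m j * qpoch q q j * (qpoch q q (m - Suc j) * (1 - u)))"
        by (simp add: algebra_simps)
      also have "\<dots> = qpoch q q m * (1 - u * v)"
        unfolding IH1 IH2 by (simp add: algebra_simps)
      finally show ?thesis by (simp add: uv qpoch_Suc)
    qed
  qed
qed

theorem q_binomial:
  "(\<Prod>i<m. 1 + z * q ^ i) = (\<Sum>k\<le>m. q ^ (k choose 2) * qbinom q m k * z ^ k)"
proof (induction m)
  case 0
  then show ?case by (simp add: binomial_eq_0)
next
  case (Suc m)
  let ?t = "\<lambda>k. q ^ (k choose 2) * qbinom q m k * z ^ k"
  have step: "q ^ (Suc j choose 2) * qbinom q (Suc m) (Suc j) * z ^ Suc j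
      = ?t (Suc j) + z * q ^ m * ?t j" if "j \<le> m" for j
  proof -
    have "q ^ (Suc j choose 2) * q ^ (m - j) = q ^ (j choose 2) * q ^ m"
      using that by (simp add: choose_two_Suc flip: power_add)
    then show ?thesis by (simp add: algebra_simps)
  qed
  have "(\<Sum>k\<le>Suc m. q ^ (k choose 2) * qbinom q (Suc m) k * z ^ k)
      = 1 + (\<Sum>j\<le>m. q ^ (Suc j choose 2) * qbinom q (Suc m) (Suc j) * z ^ Suc j)"
    by (subst sum.atMost_Suc_shift) (simp add: binomial_eq_0)
  also have "\<dots> = 1 + (\<Sum>j\<le>m. ?t (Suc j) + z * q ^ m * ?t j)"
    by (intro arg_cong[where f = "(+) 1"] sum.cong refl step) simp
  also have "\<dots> = 1 + (\<Sum>j\<le>m. ?t (Suc j)) + z * q ^ m * (\<Sum>j\<le>m. ?t j)"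
    by (simp add: sum.distrib sum_distrib_left)
  also have "1 + (\<Sum>j\<le>m. ?t (Suc j)) = (\<Sum>j\<le>Suc m. ?t j)"
    by (subst sum.atMost_Suc_shift) (simp add: binomial_eq_0)
  also have "\<dots> = (\<Sum>j\<le>m. ?t j)"
    by (simp add: qbinom_eq_0)
  finally show ?case by (simp add: Suc.IH algebra_simps)
qed

lemma prod_lessThan_add:
  "(\<Prod>i<a + b. f i) = (\<Prod>i<a. f i) * (\<Prod>i<b. f (a + i))"
  for f :: "nat \<Rightarrow> 'a::comm_monoid_mult"
  by (induction b) (simp_all add: algebra_simps)

lemma sum_atMost_add:
  "(\<Sum>k\<le>a + b. f k) = (\<Sum>k\<le>a. f k) + (\<Sum>i<b. f (Suc a + i))"
  for f :: "nat \<Rightarrow> 'a::comm_monoid_add"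
  by (induction b) (simp_all add: algebra_simps)

lemma power_tri_eq_prod: "q ^ tri n = (\<Prod>i<n. q * q ^ i)"
  by (induction n) (simp_all add: tri_Suc power_add mult_ac)

lemma power_tri_mult_prod_one_plus:
  fixes q z :: "'a::comm_ring_1"
  assumes "z * q ^ n = 1"
  shows "q ^ tri n * (\<Prod>i<n. 1 + z * q ^ i) = (\<Prod>i<n. 1 + q * q ^ i)"
proof -
  have "q * q ^ i * (1 + z * q ^ (n - Suc i)) = 1 + q * q ^ i" if "i < n" for i
  proof -
    have "q * q ^ i * q ^ (n - Suc i) = q ^ n"
      using that by (simp flip: power_add power_Suc)
    then show ?thesis
      using assms by (simp add: algebra_simps)
  qed
  moreover have "(\<Prod>i<n. 1 + z * q ^ i) = (\<Prod>i<n. 1 + z * q ^ (n - Suc i))"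
    by (rule prod.nat_diff_reindex[symmetric])
  ultimately show ?thesis
    by (simp add: power_tri_eq_prod flip: prod.distrib)
qed

lemma power_tri_mult_q_binomial_term:
  fixes q z :: "'a::comm_ring_1"
  assumes "z * q ^ n = 1"
  shows "q ^ tri n * (q ^ (k choose 2) * z ^ k) = q ^ (if k \<le> n then tri (n - k) else tri (k - Suc n))"
    (is "_ = q ^ ?e")
proof -
  have "z ^ k * q ^ (n * k) = (z * q ^ n) ^ k"
    by (simp add: power_mult power_mult_distrib)
  then have zk: "z ^ k * q ^ (n * k) = 1"
    by (simp add: assms)
  have exponent: "q ^ tri n * q ^ (k choose 2) = q ^ ?e * q ^ (n * k)"
    using choose_two_add_tri[of k n] by (simp add: add.commute flip: power_add)
  have "q ^ tri n * (q ^ (k choose 2) * z ^ k) = (q ^ tri n * q ^ (k choose 2)) * z ^ k"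
    by (simp only: mult.assoc)
  also have "\<dots> = q ^ ?e * (z ^ k * q ^ (n * k))"
    by (simp only: exponent mult_ac)
  finally show ?thesis
    by (simp add: zk)
qed

theorem qbinom_symmetric_sum:
  fixes q :: "'a::field"
  assumes "q \<noteq> 0"
  shows "(\<Prod>i<n. 1 + q * q ^ i) * (\<Prod>i<n. 1 + q ^ i)
       = (\<Sum>i\<le>n. q ^ tri i * qbinom q (2 * n) (n - i))
         + (\<Sum>i<n. q ^ tri i * qbinom q (2 * n) (Suc n + i))"
proof -
  define z where "z = inverse q ^ n"
  have zq: "z * q ^ n = 1"
    using assms by (simp add: z_def power_inverse)
  define e where "e k = (if k \<le> n then tri (n - k) else tri (k - Suc n))" for k
  have second_half: "(\<Prod>i<n. 1 + z * q ^ (n + i)) = (\<Prod>i<n. 1 + q ^ i)"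
    using zq by (simp add: power_add mult.assoc[symmetric])
  have monomial: "q ^ tri n * (q ^ (k choose 2) * qbinom q (n + n) k * z ^ k) = q ^ e k * qbinom q (n + n) k"
    for k
  proof -
    have "q ^ tri n * (q ^ (k choose 2) * qbinom q (n + n) k * z ^ k)
        = q ^ tri n * (q ^ (k choose 2) * z ^ k) * qbinom q (n + n) k"
      by (simp only: mult_ac)
    also have "q ^ tri n * (q ^ (k choose 2) * z ^ k) = q ^ e k"
      unfolding e_def by (rule power_tri_mult_q_binomial_term[OF zq])
    finally show ?thesis .
  qed
  have "(\<Prod>i<n. 1 + q * q ^ i) * (\<Prod>i<n. 1 + q ^ i) = q ^ tri n * (\<Prod>i<n + n. 1 + z * q ^ i)"
    by (simp add: prod_lessThan_add power_tri_mult_prod_one_plus[OF zq] second_half flip: mult.assoc)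
  also have "\<dots> = (\<Sum>k\<le>n + n. q ^ e k * qbinom q (n + n) k)"
    by (simp add: q_binomial sum_distrib_left monomial)
  also have "\<dots> = (\<Sum>k\<le>n. q ^ e k * qbinom q (n + n) k)
      + (\<Sum>i<n. q ^ e (Suc n + i) * qbinom q (n + n) (Suc n + i))"
    by (rule sum_atMost_add)
  also have "(\<Sum>k\<le>n. q ^ e k * qbinom q (n + n) k) = (\<Sum>i\<le>n. q ^ e (n - i) * qbinom q (n + n) (n - i))"
    by (subst atMost_atLeast0, subst sum.atLeastAtMost_rev) (simp add: atMost_atLeast0)
  finally show ?thesis
    by (simp add: e_def mult_2)
qed

section \<open>Convergence of q-Pochhammer products\<close>

lemma convergent_prod_one_minus_geometric:
  fixes a q :: "'a::{real_normed_field,banach}"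
  assumes "norm q < 1"
  shows "convergent_prod (\<lambda>k. 1 - a * q ^ k)"
proof -
  have "summable (\<lambda>k. norm a * norm q ^ k)"
    using assms by (intro summable_mult summable_geometric) simp
  then have "summable (\<lambda>k. norm (1 - a * q ^ k - 1))"
    by (simp add: norm_mult norm_power)
  then show ?thesis
    by (intro abs_convergent_prod_imp_convergent_prod summable_imp_abs_convergent_prod)
qed

lemma qpoch_tendsto_prodinf:
  fixes a q :: "'a::{real_normed_field,banach}"
  assumes "norm q < 1"
  shows "(\<lambda>m. qpoch a q m) \<longlonglongrightarrow> (\<Prod>k. 1 - a * q ^ k)"
  unfolding qpoch_def using assms
  by (intro has_prod_imp_tendsto' convergent_prod_has_prod convergent_prod_one_minus_geometric)

lemma qpoch_tendsto: "norm q < 1 \<Longrightarrow> (\<lambda>m. qpoch a q m) \<longlonglongrightarrow> qpoch_inf a q"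
  unfolding qpoch_inf_def by (rule qpoch_tendsto_prodinf)

lemma one_minus_mult_power_nonzero:
  fixes a q :: "'a::real_normed_field"
  assumes "norm a < 1" "norm q \<le> 1"
  shows "1 - a * q ^ k \<noteq> 0"
proof
  assume "1 - a * q ^ k = 0"
  then have "norm (a * q ^ k) = 1"
    by (metis eq_iff_diff_eq_0 norm_one)
  moreover have "norm a * norm q ^ k \<le> norm a"
    using assms by (intro mult_left_le power_le_one) auto
  then have "norm (a * q ^ k) < 1"
    using assms by (simp add: norm_mult norm_power)
  ultimately show False
    by simp
qed

lemma qpoch_nonzero:
  fixes a q :: "'a::real_normed_field"
  assumes "norm a < 1" "norm q \<le> 1"
  shows "qpoch a q m \<noteq> 0"
  unfolding qpoch_def prod_zero_iff[OF finite_lessThan]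
  using one_minus_mult_power_nonzero[OF assms] by blast

lemma prodinf_one_minus_geometric_nonzero:
  fixes a q :: "'a::{real_normed_field,banach}"
  assumes "norm a < 1" "norm q < 1"
  shows "(\<Prod>k. 1 - a * q ^ k) \<noteq> 0"
  using assms by (intro prodinf_nonzero convergent_prod_one_minus_geometric one_minus_mult_power_nonzero) auto

lemma qpoch_inf_nonzero: "norm a < 1 \<Longrightarrow> norm q < 1 \<Longrightarrow> qpoch_inf a q \<noteq> 0"
  unfolding qpoch_inf_def by (rule prodinf_one_minus_geometric_nonzero)

lemma Bseq_qpoch:
  fixes a q :: "'a::{real_normed_field,banach}"
  shows "norm q < 1 \<Longrightarrow> Bseq (qpoch a q)"
  using qpoch_tendsto_prodinf by (blast intro: convergent_imp_Bseq convergentI)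

lemma Bseq_inverse_qpoch:
  fixes a q :: "'a::{real_normed_field,banach}"
  assumes "norm a < 1" "norm q < 1"
  shows "Bseq (\<lambda>m. inverse (qpoch a q m))"
proof -
  have "(\<lambda>m. inverse (qpoch a q m)) \<longlonglongrightarrow> inverse (\<Prod>k. 1 - a * q ^ k)"
    using assms by (intro tendsto_inverse qpoch_tendsto_prodinf prodinf_one_minus_geometric_nonzero)
  then show ?thesis
    by (intro convergent_imp_Bseq convergentI)
qed

lemma qbinom_eq_qpoch_div:
  fixes q :: "'a::real_normed_field"
  assumes "norm q < 1" "k \<le> m"
  shows "qbinom q m k = qpoch q q m / (qpoch q q k * qpoch q q (m - k))"
  using qbinom_mult_qpoch[OF assms(2), of q] qpoch_nonzero[of q q] assms(1)
  by (simp add: field_simps)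

lemma qbinom_bounded:
  fixes q :: "'a::{real_normed_field,banach}"
  assumes "norm q < 1"
  shows "\<exists>C. \<forall>m k. norm (qbinom q m k) \<le> C"
proof -
  obtain U where "U > 0" and U: "\<And>m. norm (qpoch q q m) \<le> U"
    using Bseq_qpoch[OF assms] by (auto simp: Bseq_def)
  obtain V where "V > 0" and V: "\<And>m. norm (inverse (qpoch q q m)) \<le> V"
    using Bseq_inverse_qpoch[OF assms assms] by (auto simp: Bseq_def)
  have "norm (qbinom q m k) \<le> U * V * V" for m k
  proof (cases "k \<le> m")
    case True
    then have "norm (qbinom q m k)
        = norm (qpoch q q m) * norm (inverse (qpoch q q k)) * norm (inverse (qpoch q q (m - k)))"
      using assms by (simp add: qbinom_eq_qpoch_div norm_divide norm_mult divide_inverse)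
    also have "\<dots> \<le> U * V * V"
      using \<open>U > 0\<close> \<open>V > 0\<close> by (intro mult_mono U V) auto
    finally show ?thesis .
  next
    case False
    then show ?thesis
      using \<open>U > 0\<close> \<open>V > 0\<close> by (simp add: qbinom_eq_0)
  qed
  then show ?thesis
    by blast
qed

lemma qbinom_tendsto:
  assumes "norm q < 1"
    and k: "filterlim k at_top sequentially"
    and m_k: "filterlim (\<lambda>n. m n - k n) at_top sequentially"
  shows "(\<lambda>n. qbinom q (m n) (k n)) \<longlonglongrightarrow> 1 / qpoch_inf q q"
proof -
  let ?P = "qpoch_inf q q"
  have "eventually (\<lambda>n. 1 \<le> m n - k n) sequentially"
    using m_k unfolding filterlim_at_top by blast
  then have ev: "eventually (\<lambda>n. qbinom q (m n) (k n)
      = qpoch q q (m n) / (qpoch q q (k n) * qpoch q q (m n - k n))) sequentially"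
    by eventually_elim (simp add: qbinom_eq_qpoch_div assms(1))
  have m: "filterlim m at_top sequentially"
    by (rule filterlim_at_top_mono[OF m_k]) simp
  have "(\<lambda>n. qpoch q q (m n) / (qpoch q q (k n) * qpoch q q (m n - k n))) \<longlonglongrightarrow> ?P / (?P * ?P)"
    using assms(1)
    by (intro tendsto_divide tendsto_mult filterlim_compose[OF qpoch_tendsto] k m m_k)
       (simp_all add: qpoch_inf_nonzero)
  then show ?thesis
    using tendsto_cong[OF ev] qpoch_inf_nonzero[of q q] assms(1) by simp
qed

section \<open>Gauss's identity for Ramanujan's psi function\<close>

definition ramanujan_psi :: "complex \<Rightarrow> complex" where
  "ramanujan_psi q = (\<Sum>n. q ^ tri n)"

lemma summable_norm_power_tri: "norm q < 1 \<Longrightarrow> summable (\<lambda>n. norm (q ^ tri n))"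
  for q :: "'a::real_normed_field"
  by (rule summable_comparison_test'[OF summable_geometric[of "norm q"]])
     (simp_all add: norm_power power_decreasing le_tri)

lemma tendsto_suminf_power_tri_mult:
  fixes c :: "nat \<Rightarrow> nat \<Rightarrow> complex"
  assumes "norm q < 1"
    and bound: "\<And>i n. norm (c i n) \<le> C"
    and lim: "\<And>i. (\<lambda>n. c i n) \<longlonglongrightarrow> L"
  shows "(\<lambda>n. \<Sum>i. q ^ tri i * c i n) \<longlonglongrightarrow> ramanujan_psi q * L"
proof -
  have "(\<lambda>n. \<Sum>i. q ^ tri i * c i n) \<longlonglongrightarrow> (\<Sum>i. q ^ tri i * L)"
  proof (rule tannerys_theorem[where M = "\<lambda>i. norm (q ^ tri i) * C", THEN conjunct2, THEN conjunct2])
    show "\<forall>\<^sub>F (i, n) in at_top \<times>\<^sub>F sequentially. norm (q ^ tri i * c i n) \<le> norm (q ^ tri i) * C"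
    proof (intro always_eventually, clarify)
      show "norm (q ^ tri i * c i n) \<le> norm (q ^ tri i) * C" for i n
        unfolding norm_mult by (intro mult_left_mono bound norm_ge_zero)
    qed
    show "summable (\<lambda>i. norm (q ^ tri i) * C)"
      using assms(1) by (intro summable_mult2 summable_norm_power_tri)
  qed (simp_all add: tendsto_mult_left lim)
  moreover have "(\<Sum>i. q ^ tri i * L) = ramanujan_psi q * L"
    unfolding ramanujan_psi_def
    using summable_norm_cancel[OF summable_norm_power_tri[OF assms(1)]] by (rule suminf_mult2[symmetric])
  ultimately show ?thesis
    by simp
qed

lemma qpoch_inf_mult_neg:
  assumes "norm q < 1"
  shows "qpoch_inf a q * qpoch_inf (- a) q = qpoch_inf (a\<^sup>2) (q\<^sup>2)"
proof -
  have "qpoch_inf a q * qpoch_inf (- a) q = (\<Prod>k. (1 - a * q ^ k) * (1 - (- a) * q ^ k))"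
    unfolding qpoch_inf_def using assms
    by (intro prodinf_mult convergent_prod_one_minus_geometric)
  also have "\<dots> = qpoch_inf (a\<^sup>2) (q\<^sup>2)"
    unfolding qpoch_inf_def by (intro prodinf_cong) (simp add: algebra_simps power2_eq_square power_mult_distrib)
  finally show ?thesis .
qed

lemma qpoch_inf_neg_one:
  assumes "norm q < 1"
  shows "qpoch_inf (- 1) q = 2 * qpoch_inf (- q) q"
proof -
  have "qpoch_inf (- q) q = qpoch_inf (- 1) q / 2"
    using prodinf_split_head[OF convergent_prod_one_minus_geometric[OF assms, of "- 1"]]
    by (simp add: qpoch_inf_def)
  then show ?thesis
    by (simp add: field_simps)
qed

lemma qbinom_lower_half_tendsto:
  assumes "norm q < 1"
  shows "(\<lambda>n. \<Sum>i\<le>n. q ^ tri i * qbinom q (2 * n) (n - i))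
           \<longlonglongrightarrow> ramanujan_psi q * (1 / qpoch_inf q q)"
proof -
  obtain C where C: "\<And>m k. norm (qbinom q m k) \<le> C"
    using qbinom_bounded[OF assms] by blast
  define c where "c i n = (if i \<le> n then qbinom q (2 * n) (n - i) else 0)" for i n
  have "(\<lambda>n. \<Sum>i. q ^ tri i * c i n) \<longlonglongrightarrow> ramanujan_psi q * (1 / qpoch_inf q q)"
  proof (rule tendsto_suminf_power_tri_mult[OF assms])
    show "norm (c i n) \<le> C" for i n
      using C[of "2 * n" "n - i"] order_trans[OF norm_ge_zero C] by (simp add: c_def)
    fix i
    have "(\<lambda>n. qbinom q (2 * n) (n - i)) \<longlonglongrightarrow> 1 / qpoch_inf q q"
      using assms by (rule qbinom_tendsto) real_asymp+
    moreover have "eventually (\<lambda>n. qbinom q (2 * n) (n - i) = c i n) sequentially"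
      using eventually_ge_at_top[of i] by eventually_elim (simp add: c_def)
    ultimately show "(\<lambda>n. c i n) \<longlonglongrightarrow> 1 / qpoch_inf q q"
      by (rule Lim_transform_eventually)
  qed
  moreover have "(\<Sum>i. q ^ tri i * c i n) = (\<Sum>i\<le>n. q ^ tri i * qbinom q (2 * n) (n - i))" for n
    by (subst suminf_finite[of "{..n}"]) (auto simp: c_def)
  ultimately show ?thesis
    by simp
qed

lemma qbinom_upper_half_tendsto:
  assumes "norm q < 1"
  shows "(\<lambda>n. \<Sum>i<n. q ^ tri i * qbinom q (2 * n) (Suc n + i))
           \<longlonglongrightarrow> ramanujan_psi q * (1 / qpoch_inf q q)"
proof -
  obtain C where C: "\<And>m k. norm (qbinom q m k) \<le> C"
    using qbinom_bounded[OF assms] by blast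
  have "(\<lambda>n. \<Sum>i. q ^ tri i * qbinom q (2 * n) (Suc n + i)) \<longlonglongrightarrow> ramanujan_psi q * (1 / qpoch_inf q q)"
  proof (rule tendsto_suminf_power_tri_mult[OF assms])
    show "norm (qbinom q (2 * n) (Suc n + i)) \<le> C" for i n
      by (rule C)
    show "(\<lambda>n. qbinom q (2 * n) (Suc n + i)) \<longlonglongrightarrow> 1 / qpoch_inf q q" for i
      using assms by (rule qbinom_tendsto) real_asymp+
  qed
  moreover have "(\<Sum>i. q ^ tri i * qbinom q (2 * n) (Suc n + i))
      = (\<Sum>i<n. q ^ tri i * qbinom q (2 * n) (Suc n + i))" for n
    by (subst suminf_finite[of "{..<n}"]) (auto simp: qbinom_eq_0)
  ultimately show ?thesis
    by simp
qed

theorem gauss_psi_identity: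
  assumes "q \<noteq> 0" "norm q < 1"
  shows "qpoch_inf (q\<^sup>2) (q\<^sup>2) ^ 2 / qpoch_inf q q = ramanujan_psi q"
proof -
  let ?P = "qpoch_inf q q" and ?A = "qpoch_inf (- q) q"
  have "(\<lambda>n. (\<Prod>i<n. 1 + q * q ^ i) * (\<Prod>i<n. 1 + q ^ i))
      \<longlonglongrightarrow> ramanujan_psi q * (1 / ?P) + ramanujan_psi q * (1 / ?P)"
    unfolding qbinom_symmetric_sum[OF assms(1)]
    by (intro tendsto_add qbinom_lower_half_tendsto qbinom_upper_half_tendsto assms(2))
  moreover have "(\<lambda>n. (\<Prod>i<n. 1 + q * q ^ i) * (\<Prod>i<n. 1 + q ^ i)) \<longlonglongrightarrow> ?A * qpoch_inf (- 1) q"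
    using tendsto_mult[OF qpoch_tendsto[of q "- q"] qpoch_tendsto[of q "- 1"]] assms(2)
    by (simp add: qpoch_def)
  ultimately have "?A * qpoch_inf (- 1) q = ramanujan_psi q * (1 / ?P) + ramanujan_psi q * (1 / ?P)"
    using LIMSEQ_unique by blast
  then have "2 * (?A * ?A) = 2 * (ramanujan_psi q / ?P)"
    using qpoch_inf_neg_one[OF assms(2)] by (simp add: algebra_simps)
  then have A_squared: "?A * ?A = ramanujan_psi q / ?P"
    by (simp only: mult_cancel_left) simp
  have "qpoch_inf (q\<^sup>2) (q\<^sup>2) ^ 2 / ?P = (?P * ?A)\<^sup>2 / ?P"
    using qpoch_inf_mult_neg[OF assms(2), of q] by simp
  also have "\<dots> = ?P * (?A * ?A)"
    using qpoch_inf_nonzero[of q q] assms(2) by (simp add: power2_eq_square)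
  also have "\<dots> = ramanujan_psi q"
    using qpoch_inf_nonzero[of q q] assms(2) by (simp add: A_squared)
  finally show ?thesis .
qed

section \<open>The partition generating function\<close>

lemma powser_Cauchy_product_sums:
  fixes a b :: "nat \<Rightarrow> 'a::{real_normed_field,banach}"
  assumes "summable (\<lambda>n. norm (a n * x ^ n))" "summable (\<lambda>n. norm (b n * x ^ n))"
  shows "(\<lambda>n. (\<Sum>i\<le>n. a i * b (n - i)) * x ^ n) sums ((\<Sum>n. a n * x ^ n) * (\<Sum>n. b n * x ^ n))"
proof -
  have "(\<Sum>i\<le>n. a i * x ^ i * (b (n - i) * x ^ (n - i))) = (\<Sum>i\<le>n. a i * b (n - i)) * x ^ n" for n
    unfolding sum_distrib_right
  proof (intro sum.cong refl)
    fix i assume "i \<in> {..n}"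
    then have "x ^ i * x ^ (n - i) = x ^ n"
      by (simp flip: power_add)
    then show "a i * x ^ i * (b (n - i) * x ^ (n - i)) = a i * b (n - i) * x ^ n"
      by (metis mult.assoc mult.left_commute)
  qed
  then show ?thesis
    using Cauchy_product_sums[OF assms] by simp
qed

lemma sums_multiples_iff:
  fixes c :: "nat \<Rightarrow> 'a::real_normed_field"
  assumes "0 < p"
  shows "(\<lambda>m. of_bool (p dvd m) * c (m div p) * x ^ m) sums s \<longleftrightarrow> (\<lambda>k. c k * (x ^ p) ^ k) sums s"
proof -
  have "strict_mono (\<lambda>k. p * k)"
    using assms by (intro strict_monoI) simp
  then have "(\<lambda>k. of_bool (p dvd p * k) * c (p * k div p) * x ^ (p * k)) sums s
      \<longleftrightarrow> (\<lambda>m. of_bool (p dvd m) * c (m div p) * x ^ m) sums s"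
    by (rule sums_mono_reindex) (auto elim!: dvdE)
  then show ?thesis
    using assms by (simp add: power_mult)
qed

text \<open>The partitions of \<open>m\<close> into parts at most \<open>M\<close>; in the recursion, \<open>i\<close> is the sum of
  the parts smaller than \<open>Suc M\<close>.\<close>

fun bounded_partition_count :: "nat \<Rightarrow> nat \<Rightarrow> nat" where
  "bounded_partition_count 0 m = of_bool (m = 0)"
| "bounded_partition_count (Suc M) m =
     (\<Sum>i\<le>m. bounded_partition_count M i * of_bool (Suc M dvd (m - i)))"

definition partition_count :: "nat \<Rightarrow> nat" where
  "partition_count m = bounded_partition_count m m"

lemma bounded_partition_count_sums_step:
  fixes x :: "'a::{real_normed_field,banach}"
  assumes "norm x < 1"
    and "summable (\<lambda>m. norm (of_nat (bounded_partition_count M m) * x ^ m))"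
  shows "(\<lambda>m. of_nat (bounded_partition_count (Suc M) m) * x ^ m)
           sums ((\<Sum>m. of_nat (bounded_partition_count M m) * x ^ m) * inverse (1 - x ^ Suc M))"
proof -
  let ?d = "\<lambda>m. of_bool (Suc M dvd m) :: 'a"
  have "summable (\<lambda>m. norm (?d m * x ^ m))"
    by (rule summable_comparison_test'[OF summable_geometric[of "norm x"]])
       (use assms(1) in \<open>simp_all add: norm_mult norm_power\<close>)
  from powser_Cauchy_product_sums[OF assms(2) this]
  have "(\<lambda>m. of_nat (bounded_partition_count (Suc M) m) * x ^ m)
          sums ((\<Sum>m. of_nat (bounded_partition_count M m) * x ^ m) * (\<Sum>m. ?d m * x ^ m))"
    by simp
  moreover have "(\<Sum>m. ?d m * x ^ m) = inverse (1 - x ^ Suc M)"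
  proof -
    have "norm (x ^ Suc M) < 1"
      using assms(1) by (simp add: norm_power power_less_one_iff del: power_Suc)
    then have "(\<lambda>k. 1 * (x ^ Suc M) ^ k) sums inverse (1 - x ^ Suc M)"
      using geometric_sums by (simp add: inverse_eq_divide)
    then have "(\<lambda>m. of_bool (Suc M dvd m) * 1 * x ^ m) sums inverse (1 - x ^ Suc M)"
      by (rule sums_multiples_iff[THEN iffD2, rotated]) simp
    then show ?thesis
      by (simp add: sums_iff)
  qed
  ultimately show ?thesis
    by simp
qed

lemma summable_bounded_partition_count:
  fixes r :: real
  assumes "0 \<le> r" "r < 1"
  shows "summable (\<lambda>m. of_nat (bounded_partition_count M m) * r ^ m)"
proof (induction M)
  case 0
  show ?case
    by (rule summable_finite[of "{0}"]) auto
next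
  case (Suc M)
  then have "summable (\<lambda>m. norm (of_nat (bounded_partition_count M m) * r ^ m))"
    using assms by simp
  then show ?case
    using bounded_partition_count_sums_step[of r M] assms by (auto simp: sums_iff)
qed

lemma bounded_partition_count_sums:
  fixes x :: "'a::{real_normed_field,banach}"
  assumes "norm x < 1"
  shows "(\<lambda>m. of_nat (bounded_partition_count M m) * x ^ m) sums inverse (qpoch x x M)"
proof (induction M)
  case 0
  have "(\<lambda>m. of_nat (bounded_partition_count 0 m) * x ^ m) = (\<lambda>m. if m = 0 then 1 else 0)"
    by auto
  then show ?case
    using sums_single[of 0 "\<lambda>_. 1::'a"] by simp
next
  case (Suc M)
  have "summable (\<lambda>m. norm (of_nat (bounded_partition_count M m) * x ^ m))"
    using summable_bounded_partition_count[of "norm x" M] assms by (simp add: norm_mult norm_power)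
  from bounded_partition_count_sums_step[OF assms this] Suc.IH
  show ?case
    by (simp add: sums_iff qpoch_Suc mult.commute)
qed

lemma incseq_bounded_partition_count: "incseq (\<lambda>M. bounded_partition_count M m)"
proof (rule incseq_SucI)
  show "bounded_partition_count M m \<le> bounded_partition_count (Suc M) m" for M
    using member_le_sum[of m "{..m}" "\<lambda>i. bounded_partition_count M i * of_bool (Suc M dvd (m - i))"]
    by simp
qed

lemma bounded_partition_count_stable:
  assumes "m \<le> M"
  shows "bounded_partition_count M m = partition_count m"
proof -
  have step: "bounded_partition_count (Suc K) m = bounded_partition_count K m" if "m \<le> K" for K
  proof -
    have "bounded_partition_count (Suc K) m = (\<Sum>i\<le>m. if i = m then bounded_partition_count K i else 0)"
      unfolding bounded_partition_count.simps(2)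
      using \<open>m \<le> K\<close> nat_dvd_not_less[of "m - _" "Suc K"] by (intro sum.cong) auto
    then show ?thesis
      by simp
  qed
  show ?thesis
    using assms unfolding partition_count_def
    by (induction M rule: dec_induct) (simp_all add: step del: bounded_partition_count.simps(2))
qed

lemma partition_count_pos: "0 < partition_count m"
proof -
  have "1 = bounded_partition_count (Suc 0) m"
    by simp
  also have "\<dots> \<le> bounded_partition_count (max m 1) m"
    by (rule incseqD[OF incseq_bounded_partition_count]) simp
  also have "\<dots> = partition_count m"
    by (rule bounded_partition_count_stable) simp
  finally show ?thesis
    by simp
qed

lemma bounded_partition_count_le: "bounded_partition_count M m \<le> partition_count m"
proof (cases "M \<le> m")
  case True
  then show ?thesis
    unfolding partition_count_def by (rule incseqD[OF incseq_bounded_partition_count])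
next
  case False
  then show ?thesis
    by (simp add: bounded_partition_count_stable)
qed

lemma summable_partition_count:
  fixes r :: real
  assumes "0 \<le> r" "r < 1"
  shows "summable (\<lambda>m. of_nat (partition_count m) * r ^ m)"
proof -
  obtain V where V: "\<And>n. norm (inverse (qpoch r r n)) \<le> V"
    using Bseq_inverse_qpoch[of r r] assms by (auto simp: Bseq_def)
  show ?thesis
  proof (rule bounded_imp_summable)
    fix n
    have "(\<Sum>k\<le>n. of_nat (partition_count k) * r ^ k) = (\<Sum>k\<le>n. of_nat (bounded_partition_count n k) * r ^ k)"
      by (simp add: bounded_partition_count_stable)
    also have "\<dots> \<le> (\<Sum>k. of_nat (bounded_partition_count n k) * r ^ k)"
      using assms by (intro sum_le_suminf summable_bounded_partition_count) auto
    also have "\<dots> = inverse (qpoch r r n)"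
      using bounded_partition_count_sums[of r n] assms by (simp add: sums_iff)
    also have "\<dots> \<le> \<bar>inverse (qpoch r r n)\<bar>"
      by (rule abs_ge_self)
    also have "\<dots> \<le> V"
      using V[of n] by simp
    finally show "(\<Sum>k\<le>n. of_nat (partition_count k) * r ^ k) \<le> V" .
  qed (use assms in simp)
qed

theorem partition_count_sums:
  assumes "norm x < 1"
  shows "(\<lambda>m. of_nat (partition_count m) * x ^ m) sums inverse (qpoch_inf x x)"
proof -
  let ?M = "\<lambda>k. of_nat (partition_count k) * norm x ^ k"
  have tannery: "summable (\<lambda>k. norm (of_nat (partition_count k) * x ^ k))
      \<and> (\<lambda>n. \<Sum>k. of_nat (bounded_partition_count n k) * x ^ k) \<longlonglongrightarrow> (\<Sum>k. of_nat (partition_count k) * x ^ k)"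
  proof (rule tannerys_theorem[where M = ?M, THEN conjunct2])
    show "(\<lambda>n. of_nat (bounded_partition_count n k) * x ^ k) \<longlonglongrightarrow> of_nat (partition_count k) * x ^ k" for k
      by (rule tendsto_eventually, rule eventually_mono[OF eventually_ge_at_top[of k]])
         (simp add: bounded_partition_count_stable)
    show "\<forall>\<^sub>F (k, n) in at_top \<times>\<^sub>F sequentially.
        norm (of_nat (bounded_partition_count n k) * x ^ k) \<le> ?M k"
    proof (intro always_eventually, clarify)
      show "norm (of_nat (bounded_partition_count n k) * x ^ k) \<le> ?M k" for k n
        unfolding norm_mult norm_power norm_of_nat
        by (rule mult_right_mono) (simp_all add: bounded_partition_count_le)
    qed
    show "summable ?M"
      using assms by (intro summable_partition_count) auto
  qed simp
  have "(\<lambda>n. inverse (qpoch x x n)) \<longlonglongrightarrow> inverse (qpoch_inf x x)"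
    using assms by (intro tendsto_inverse qpoch_tendsto qpoch_inf_nonzero)
  moreover have "(\<Sum>k. of_nat (bounded_partition_count n k) * x ^ k) = inverse (qpoch x x n)" for n
    using bounded_partition_count_sums[OF assms] by (rule sums_unique[symmetric])
  ultimately have "(\<lambda>n. \<Sum>k. of_nat (bounded_partition_count n k) * x ^ k) \<longlonglongrightarrow> inverse (qpoch_inf x x)"
    by simp
  then have "(\<Sum>k. of_nat (partition_count k) * x ^ k) = inverse (qpoch_inf x x)"
    by (rule LIMSEQ_unique[OF conjunct2[OF tannery]])
  moreover have "summable (\<lambda>k. of_nat (partition_count k) * x ^ k)"
    by (rule summable_norm_cancel[OF conjunct1[OF tannery]])
  ultimately show ?thesis
    by (simp add: sums_iff)
qed

section \<open>The coefficients of the quotient\<close>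

definition tri_partition_count :: "nat \<Rightarrow> nat \<Rightarrow> nat" where
  "tri_partition_count p n =
     (\<Sum>i\<le>n. of_bool (i \<in> range tri) * (of_bool (p dvd (n - i)) * partition_count ((n - i) div p)))"

lemma tri_indicator_sums:
  assumes "norm q < 1"
  shows "(\<lambda>i. of_bool (i \<in> range tri) * q ^ i) sums ramanujan_psi q"
proof -
  have "(\<lambda>n. q ^ tri n) sums ramanujan_psi q"
    unfolding ramanujan_psi_def
    using summable_norm_cancel[OF summable_norm_power_tri[OF assms]] by (rule summable_sums)
  then show ?thesis
    by (subst sums_mono_reindex[OF strict_mono_tri, symmetric]) auto
qed

lemma summable_norm_multiples_partition_count:
  fixes q :: "'a::{real_normed_field,banach}"
  assumes "0 < p" "norm q < 1"
  shows "summable (\<lambda>m. norm (of_bool (p dvd m) * of_nat (partition_count (m div p)) * q ^ m))"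
proof -
  have "summable (\<lambda>k. of_nat (partition_count k) * (norm q ^ p) ^ k)"
    using assms by (intro summable_partition_count) (simp_all add: power_less_one_iff)
  from summable_sums[OF this]
  have "(\<lambda>m. of_bool (p dvd m) * of_nat (partition_count (m div p)) * norm q ^ m) sums
      (\<Sum>k. of_nat (partition_count k) * (norm q ^ p) ^ k)"
    by (rule sums_multiples_iff[OF assms(1), THEN iffD2])
  moreover have "norm (of_bool (p dvd m) * of_nat (partition_count (m div p)) * q ^ m)
      = of_bool (p dvd m) * of_nat (partition_count (m div p)) * norm q ^ m" for m
    by (cases "p dvd m") (simp_all add: norm_mult norm_power)
  ultimately show ?thesis
    by (simp add: sums_iff)
qed

lemma multiples_partition_count_sums:
  assumes "0 < p" "norm q < 1"
  shows "(\<lambda>m. of_bool (p dvd m) * of_nat (partition_count (m div p)) * q ^ m)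
           sums inverse (qpoch_inf (q ^ p) (q ^ p))"
proof -
  have "norm (q ^ p) < 1"
    using assms by (simp add: norm_power power_less_one_iff)
  then show ?thesis
    by (rule sums_multiples_iff[OF assms(1), THEN iffD2, OF partition_count_sums])
qed

lemma tri_partition_count_sums:
  fixes q :: complex
  assumes "0 < p" "q \<noteq> 0" "norm q < 1"
  shows "(\<lambda>n. of_nat (tri_partition_count p n) * q ^ n) sums
           (qpoch_inf (q\<^sup>2) (q\<^sup>2) ^ 2 / (qpoch_inf q q * qpoch_inf (q ^ p) (q ^ p)))"
proof -
  let ?t = "\<lambda>i. of_bool (i \<in> range tri) :: complex"
  let ?d = "\<lambda>m. of_bool (p dvd m) * of_nat (partition_count (m div p)) :: complex"
  have "summable (\<lambda>i. norm (?t i * q ^ i))"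
    by (rule summable_comparison_test'[OF summable_geometric[of "norm q"]])
       (use assms(3) in \<open>simp_all add: norm_mult norm_power\<close>)
  from powser_Cauchy_product_sums[OF this summable_norm_multiples_partition_count[OF assms(1,3)]]
  have "(\<lambda>n. (\<Sum>i\<le>n. ?t i * ?d (n - i)) * q ^ n) sums
      (ramanujan_psi q * inverse (qpoch_inf (q ^ p) (q ^ p)))"
    unfolding sums_unique[OF tri_indicator_sums[OF assms(3)], symmetric]
      sums_unique[OF multiples_partition_count_sums[OF assms(1,3)], symmetric]
    by (simp only: mult.assoc)
  moreover have "(\<Sum>i\<le>n. ?t i * ?d (n - i)) = of_nat (tri_partition_count p n)" for n
    by (simp add: tri_partition_count_def)
  moreover have "qpoch_inf (q\<^sup>2) (q\<^sup>2) ^ 2 / (qpoch_inf q q * qpoch_inf (q ^ p) (q ^ p))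
      = ramanujan_psi q * inverse (qpoch_inf (q ^ p) (q ^ p))"
    unfolding divide_divide_eq_left[symmetric] gauss_psi_identity[OF assms(2,3)] by (rule divide_inverse)
  ultimately show ?thesis
    by simp
qed

lemma powser_coeffs_unique:
  fixes a b :: "nat \<Rightarrow> 'a::{real_normed_field,banach}"
  assumes "0 < r"
    and a: "\<And>x. x \<noteq> 0 \<Longrightarrow> norm x < r \<Longrightarrow> (\<lambda>n. a n * x ^ n) sums f x"
    and b: "\<And>x. x \<noteq> 0 \<Longrightarrow> norm x < r \<Longrightarrow> (\<lambda>n. b n * x ^ n) sums f x"
  shows "a = b"
proof -
  define d where "d n = a n - b n" for n
  have d: "(\<lambda>n. d n * x ^ n) sums 0" if "x \<noteq> 0" "norm x < r" for x
    using sums_diff[OF a[OF that] b[OF that]] by (simp add: d_def algebra_simps)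
  have "d k = 0" for k
  proof (induction k rule: less_induct)
    case (less k)
    have shifted: "(\<lambda>i. d (i + k) * x ^ i) sums 0" if "x \<noteq> 0" "norm x < r" for x
    proof -
      have "(\<lambda>i. d (i + k) * x ^ (i + k)) sums 0"
        using sums_zero_iff_shift[of k "\<lambda>i. d i * x ^ i"] less.IH d[OF that] by simp
      then have "(\<lambda>i. d (i + k) * x ^ (i + k) / x ^ k) sums (0 / x ^ k)"
        by (rule sums_divide)
      then show ?thesis
        using that by (simp add: power_add)
    qed
    show "d k = 0"
      using powser_limit_0_strong[OF \<open>0 < r\<close> shifted] by (simp add: tendsto_const_iff)
  qed
  then show ?thesis
    by (auto simp: d_def)
qed

lemma tri_partition_count_pos_iff:
  "0 < tri_partition_count p n \<longleftrightarrow> (\<exists>i\<le>n. i \<in> range tri \<and> p dvd (n - i))"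
  (is "_ \<longleftrightarrow> ?exists")
proof
  assume "0 < tri_partition_count p n"
  show ?exists
  proof (rule ccontr)
    assume "\<not> ?exists"
    then have "tri_partition_count p n = 0"
      unfolding tri_partition_count_def by (intro sum.neutral) auto
    with \<open>0 < tri_partition_count p n\<close> show False
      by simp
  qed
next
  assume ?exists
  then obtain i where i: "i \<le> n" "i \<in> range tri" "p dvd (n - i)"
    by blast
  let ?f = "\<lambda>i. of_bool (i \<in> range tri) * (of_bool (p dvd (n - i)) * partition_count ((n - i) div p))"
  have "0 < partition_count ((n - i) div p)"
    by (rule partition_count_pos)
  also have "\<dots> = ?f i"
    using i by simp
  also have "\<dots> \<le> tri_partition_count p n"
    unfolding tri_partition_count_def by (rule member_le_sum[where f = ?f]) (use i in auto)
  finally show "0 < tri_partition_count p n" .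
qed

section \<open>Triangular residues modulo an odd number\<close>

lemma tri_mod_cong:
  assumes "coprime 2 p"
  shows "[tri (s mod p) = tri s] (mod p)"
proof -
  have "[s mod p * (s mod p + 1) = s * (s + 1)] (mod p)"
    by (intro cong_mult cong_add) (simp_all add: cong_def)
  then have "[2 * tri (s mod p) = 2 * tri s] (mod p)"
    by (simp only: double_tri)
  then show ?thesis
    using cong_mult_lcancel_nat[OF assms] by blast
qed

lemma int_tri: "int (tri s) = int s * (int s + 1) div 2"
  unfolding tri_def by (simp add: zdiv_int algebra_simps)

lemma ex_tri_eq_int_triangular: "\<exists>s. r * (r + 1) div 2 = int (tri s)" for r :: int
proof (cases "0 \<le> r")
  case True
  then show ?thesis
    by (metis int_nat_eq int_tri)
next
  case False
  have "r * (r + 1) = (- r - 1) * (- r - 1 + 1)"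
    by (simp add: algebra_simps)
  then have "r * (r + 1) div 2 = int (tri (nat (- r - 1)))"
    using False by (simp add: int_tri)
  then show ?thesis
    by blast
qed

lemma cong_le_if_less_add:
  fixes m n p :: nat
  assumes "[m = n] (mod p)" "m < n + p"
  shows "m \<le> n"
proof (rule ccontr)
  assume "\<not> m \<le> n"
  then have "p dvd m - n" "0 < m - n" "m - n < p"
    using assms by (simp_all add: cong_altdef_nat)
  then show False
    by (simp add: nat_dvd_not_less)
qed

lemma Min_tri_res_le_bigN:
  assumes "s \<le> p - 1" "tri_res p s \<noteq> {}"
  shows "int (Min (tri_res p s)) \<le> bigN p + int p"
proof -
  have "finite {Min (tri_res p s) | s. s \<le> p - 1 \<and> tri_res p s \<noteq> {}}"
    by (rule finite_subset[of _ "(\<lambda>s. Min (tri_res p s)) ` {..p - 1}"]) auto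
  then have "Min (tri_res p s) \<le> Max {Min (tri_res p s) | s. s \<le> p - 1 \<and> tri_res p s \<noteq> {}}"
    using assms by (intro Max_ge) auto
  then show ?thesis
    by (simp add: bigN_def)
qed

lemma ex_tri_le_cong_of_bigN_less:
  assumes "coprime 2 p" "bigN p < int n" "[n = tri s] (mod p)"
  shows "\<exists>i\<le>n. i \<in> range tri \<and> p dvd (n - i)"
proof -
  have "p > 0"
  proof (rule ccontr)
    assume "\<not> p > 0"
    with assms(1) show False
      by simp
  qed
  have "[tri (s mod p) = n mod p] (mod p)"
    using tri_mod_cong[OF assms(1), of s] assms(3) by (simp add: cong_def)
  moreover have "s mod p \<le> p - 1"
    using mod_less_divisor[OF \<open>p > 0\<close>, of s] by linarith
  ultimately have "tri (s mod p) \<in> tri_res p (n mod p)"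
    unfolding tri_res_def by blast
  then have nonempty: "tri_res p (n mod p) \<noteq> {}"
    by blast
  define m where "m = Min (tri_res p (n mod p))"
  have "finite (tri_res p (n mod p))"
    by (rule finite_subset[of _ "tri ` {..p - 1}"]) (auto simp: tri_res_def)
  then have "m \<in> tri_res p (n mod p)"
    unfolding m_def using nonempty by (rule Min_in)
  then have "m \<in> range tri" and m_cong: "[m = n] (mod p)"
    unfolding tri_res_def by (auto simp: cong_def)
  have "m < n + p"
  proof -
    have "n mod p \<le> p - 1"
      using mod_less_divisor[OF \<open>p > 0\<close>, of n] by linarith
    then have "int m \<le> bigN p + int p"
      unfolding m_def by (rule Min_tri_res_le_bigN[OF _ nonempty])
    then show ?thesis
      using assms(2) by linarith
  qed
  with m_cong have "m \<le> n"
    by (rule cong_le_if_less_add)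
  moreover have "p dvd n - m"
    using cong_sym[OF m_cong] \<open>m \<le> n\<close> by (simp add: cong_altdef_nat)
  ultimately show ?thesis
    using \<open>m \<in> range tri\<close> by blast
qed

lemma int_triangular_cong_iff:
  assumes "coprime 2 p" "bigN p < int n"
  shows "(\<exists>r::int. [int n = r * (r + 1) div 2] (mod int p)) \<longleftrightarrow> (\<exists>i\<le>n. i \<in> range tri \<and> p dvd (n - i))"
proof
  assume "\<exists>r::int. [int n = r * (r + 1) div 2] (mod int p)"
  then obtain s where "[int n = int (tri s)] (mod int p)"
    using ex_tri_eq_int_triangular by metis
  then have "[n = tri s] (mod p)"
    by (simp add: cong_int_iff)
  with assms show "\<exists>i\<le>n. i \<in> range tri \<and> p dvd (n - i)"
    by (rule ex_tri_le_cong_of_bigN_less)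
next
  assume "\<exists>i\<le>n. i \<in> range tri \<and> p dvd (n - i)"
  then obtain s where "tri s \<le> n" "p dvd (n - tri s)"
    by blast
  then have "[int n = int (tri s)] (mod int p)"
    by (simp add: cong_int_iff cong_altdef_nat)
  then show "\<exists>r::int. [int n = r * (r + 1) div 2] (mod int p)"
    by (auto simp: int_tri)
qed

theorem theorem1p3:
  fixes p :: nat and a :: "nat \<Rightarrow> complex"
  assumes "prime p" and "p \<ge> 3"
    and "\<And>q. norm q < 1 \<Longrightarrow>
           (\<lambda>n. a n * q ^ n) sums
             (qpoch_inf (q^2) (q^2) ^ 2 / (qpoch_inf q q * qpoch_inf (q^p) (q^p)))"
  shows "\<forall>n. int n > bigN p \<longrightarrow>
           (if (\<exists>r::int. [int n = r * (r + 1) div 2] (mod int p))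
            then a n \<in> \<real> \<and> Re (a n) > 0
            else a n = 0)"
proof (intro allI impI)
  fix n
  assume "bigN p < int n"
  have "0 < p" "coprime 2 p"
    using assms(1,2) prime_odd_nat[OF assms(1)] by simp_all
  have "a = (\<lambda>n. of_nat (tri_partition_count p n))"
    using assms(3) tri_partition_count_sums[OF \<open>0 < p\<close>]
    by (intro powser_coeffs_unique[OF zero_less_one,
          where f = "\<lambda>q. qpoch_inf (q^2) (q^2) ^ 2 / (qpoch_inf q q * qpoch_inf (q^p) (q^p))"])
  then show "if (\<exists>r::int. [int n = r * (r + 1) div 2] (mod int p))
            then a n \<in> \<real> \<and> Re (a n) > 0 else a n = 0"
    using int_triangular_cong_iff[OF \<open>coprime 2 p\<close> \<open>bigN p < int n\<close>]
      tri_partition_count_pos_iff[of p n]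
    by auto
qed

end
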